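(* Let $\mathcal A=(a_{ij})_{0\le i,j\le2}$ and $\mathcal B=(b_{ij})_{0\le i,j\le 2}$ be symmetric $3\times3$ matrices whose 12 independent entries $a_{ij},b_{ij}$ ($i\le j$) are indeterminates, and let $p_0,q_0,p_1,q_1$ be further indeterminates. For $s,t$ put $\mathbf V(s,t)=(s^2,st,t^2)^T$, $\mathbf F(s,t)=(\mathcal A\mathbf V(s,t))\times(\mathcal B\mathbf V(s,t))$ (vector cross product) with components $F^{(1)},F^{(2)},F^{(3)}$, and $Q(s,t)=(F^{(2)}(s,t))^2-F^{(1)}(s,t)F^{(3)}(s,t)$. Define polynomials $p_n,q_n$ by $$p_{n+1}=q_{n-1}F^{(1)}(p_n,q_n)-p_{n-1}F^{(2)}(p_n,q_n),\qquad q_{n+1}=q_{n-1}F^{(2)}(p_n,q_n)-p_{n-1}F^{(3)}(p_n,q_n)\qquad(n\ge1),$$ and set $Q_n=Q(p_n,q_n)$. Then for every $n\ge1$, $Q_n$ divides $Q_{n+1}$ in the polynomial ring $\mathbb Z[a_{ij},b_{ij},p_0,q_0,p_1,q_1]$.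
   Context: This recurrence is the homogenisation ($u_n=p_n/q_n$) of the 12-parameter symmetric QRT map $u_{n+1}=\frac{f^{(1)}(u_n)-u_{n-1}f^{(2)}(u_n)}{f^{(2)}(u_n)-u_{n-1}f^{(3)}(u_n)}$ with $\mathbf f(u)=\mathbf F(u,1)$. *)

theory Defs
  imports Main "HOL-Library.Poly_Mapping"
begin

datatype var = a00 | a01 | a02 | a11 | a12 | a22
             | b00 | b01 | b02 | b11 | b12 | b22
             | p0 | q0 | p1 | q1

text \<open>The polynomial ring Z[a_ij, b_ij, p0, q0, p1, q1]: finitely supported maps from
 monomials (finitely supported exponent vectors) to integer coefficients.\<close>
type_synonym mpoly = "(var \<Rightarrow>\<^sub>0 nat) \<Rightarrow>\<^sub>0 int"

definition Var :: "var \<Rightarrow> mpoly" where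
  "Var x = Poly_Mapping.single (Poly_Mapping.single x 1) 1"

fun Amat :: "nat \<Rightarrow> nat \<Rightarrow> mpoly" where
  "Amat i j = (let (k, l) = (min i j, max i j) in
     if (k, l) = (0, 0) then Var a00 else if (k, l) = (0, 1) then Var a01
     else if (k, l) = (0, 2) then Var a02 else if (k, l) = (1, 1) then Var a11
     else if (k, l) = (1, 2) then Var a12 else Var a22)"

fun Bmat :: "nat \<Rightarrow> nat \<Rightarrow> mpoly" where
  "Bmat i j = (let (k, l) = (min i j, max i j) in
     if (k, l) = (0, 0) then Var b00 else if (k, l) = (0, 1) then Var b01
     else if (k, l) = (0, 2) then Var b02 else if (k, l) = (1, 1) then Var b11
     else if (k, l) = (1, 2) then Var b12 else Var b22)"

definition Vvec :: "mpoly \<Rightarrow> mpoly \<Rightarrow> nat \<Rightarrow> mpoly" where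
  "Vvec s t j = (if j = 0 then s^2 else if j = 1 then s * t else t^2)"

definition AV :: "mpoly \<Rightarrow> mpoly \<Rightarrow> nat \<Rightarrow> mpoly" where
  "AV s t i = (\<Sum>j<3. Amat i j * Vvec s t j)"

definition BV :: "mpoly \<Rightarrow> mpoly \<Rightarrow> nat \<Rightarrow> mpoly" where
  "BV s t i = (\<Sum>j<3. Bmat i j * Vvec s t j)"

definition F1 :: "mpoly \<Rightarrow> mpoly \<Rightarrow> mpoly" where
  "F1 s t = AV s t 1 * BV s t 2 - AV s t 2 * BV s t 1"
definition F2 :: "mpoly \<Rightarrow> mpoly \<Rightarrow> mpoly" where
  "F2 s t = AV s t 2 * BV s t 0 - AV s t 0 * BV s t 2"
definition F3 :: "mpoly \<Rightarrow> mpoly \<Rightarrow> mpoly" where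
  "F3 s t = AV s t 0 * BV s t 1 - AV s t 1 * BV s t 0"

definition Qf :: "mpoly \<Rightarrow> mpoly \<Rightarrow> mpoly" where
  "Qf s t = (F2 s t)^2 - F1 s t * F3 s t"

fun pq :: "nat \<Rightarrow> mpoly \<times> mpoly" where
  "pq 0 = (Var p0, Var q0)"
| "pq (Suc 0) = (Var p1, Var q1)"
| "pq (Suc (Suc n)) =
     (let (pm, qm) = pq n; (pn, qn) = pq (Suc n) in
      (qm * F1 pn qn - pm * F2 pn qn, qm * F2 pn qn - pm * F3 pn qn))"

definition Qn :: "nat \<Rightarrow> mpoly" where
  "Qn n = Qf (fst (pq n)) (snd (pq n))"

end

theory Submission
  imports Defs
begin

text \<open>Write \<open>G(Y) = (A Y) \<times> (B Y)\<close>, so that \<open>F = G \<circ> V\<close> and \<open>Q = C \<circ> F\<close> for the conic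
  \<open>C(W) = W\<^sub>1\<^sup>2 - W\<^sub>0 W\<^sub>2\<close>, which vanishes on the Veronese curve \<open>V(s,t) = (s\<^sup>2, s t, t\<^sup>2)\<close>.
  For symmetric \<open>A\<close>, \<open>B\<close> the quadratic map \<open>G\<close> satisfies \<open>G(G(Y)) = \<phi>(Y) Y\<close>.
  With \<open>f = F(p\<^sub>n, q\<^sub>n)\<close> one checks \<open>V(p\<^sub>n\<^sub>+\<^sub>1, q\<^sub>n\<^sub>+\<^sub>1) = k f + Q\<^sub>n V(p\<^sub>n\<^sub>-\<^sub>1, q\<^sub>n\<^sub>-\<^sub>1)\<close> for a scalar \<open>k\<close>.
  Hence, modulo \<open>Q\<^sub>n\<close>, \<open>F(p\<^sub>n\<^sub>+\<^sub>1, q\<^sub>n\<^sub>+\<^sub>1) \<equiv> k\<^sup>2 G(f) = k\<^sup>2 \<phi> V(p\<^sub>n, q\<^sub>n)\<close>, a point of the conic,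
  so \<open>Q\<^sub>n\<^sub>+\<^sub>1 \<equiv> 0\<close>.\<close>

definition mat_vec :: "(nat \<Rightarrow> nat \<Rightarrow> 'a::comm_ring_1) \<Rightarrow> (nat \<Rightarrow> 'a) \<Rightarrow> nat \<Rightarrow> 'a" where
  "mat_vec M Y i = M i 0 * Y 0 + M i 1 * Y 1 + M i 2 * Y 2"

definition cross3 :: "(nat \<Rightarrow> 'a::comm_ring_1) \<Rightarrow> (nat \<Rightarrow> 'a) \<Rightarrow> nat \<Rightarrow> 'a" where
  "cross3 u v i = (if i = 0 then u 1 * v 2 - u 2 * v 1
     else if i = 1 then u 2 * v 0 - u 0 * v 2 else u 0 * v 1 - u 1 * v 0)"

definition adj_mat_vec :: "(nat \<Rightarrow> nat \<Rightarrow> 'a::comm_ring_1) \<Rightarrow> (nat \<Rightarrow> 'a) \<Rightarrow> nat \<Rightarrow> 'a" where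
  "adj_mat_vec M v i = (if i = 0 then
       (M 1 1 * M 2 2 - M 1 2 * M 2 1) * v 0 + (M 0 2 * M 2 1 - M 0 1 * M 2 2) * v 1
       + (M 0 1 * M 1 2 - M 0 2 * M 1 1) * v 2
     else if i = 1 then
       (M 1 2 * M 2 0 - M 1 0 * M 2 2) * v 0 + (M 0 0 * M 2 2 - M 0 2 * M 2 0) * v 1
       + (M 0 2 * M 1 0 - M 0 0 * M 1 2) * v 2
     else
       (M 1 0 * M 2 1 - M 1 1 * M 2 0) * v 0 + (M 0 1 * M 2 0 - M 0 0 * M 2 1) * v 1
       + (M 0 0 * M 1 1 - M 0 1 * M 1 0) * v 2)"

definition det3 :: "(nat \<Rightarrow> 'a::comm_ring_1) \<Rightarrow> (nat \<Rightarrow> 'a) \<Rightarrow> (nat \<Rightarrow> 'a) \<Rightarrow> 'a" where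
  "det3 u v w = u 0 * (v 1 * w 2 - v 2 * w 1) - u 1 * (v 0 * w 2 - v 2 * w 0)
     + u 2 * (v 0 * w 1 - v 1 * w 0)"

definition symmetric3 :: "(nat \<Rightarrow> nat \<Rightarrow> 'a) \<Rightarrow> bool" where
  "symmetric3 M \<longleftrightarrow> M 1 0 = M 0 1 \<and> M 2 0 = M 0 2 \<and> M 2 1 = M 1 2"

definition quad_map :: "(nat \<Rightarrow> nat \<Rightarrow> 'a::comm_ring_1) \<Rightarrow> (nat \<Rightarrow> nat \<Rightarrow> 'a) \<Rightarrow> (nat \<Rightarrow> 'a) \<Rightarrow> nat \<Rightarrow> 'a" where
  "quad_map A B Y = cross3 (mat_vec A Y) (mat_vec B Y)"

definition conic :: "(nat \<Rightarrow> 'a::comm_ring_1) \<Rightarrow> 'a" where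
  "conic W = (W 1)^2 - W 0 * W 2"

definition veronese :: "'a::comm_ring_1 \<Rightarrow> 'a \<Rightarrow> nat \<Rightarrow> 'a" where
  "veronese s t j = (if j = 0 then s^2 else if j = 1 then s * t else t^2)"

lemma less_three_cases: "(i::nat) < 3 \<Longrightarrow> i = 0 \<or> i = 1 \<or> i = 2"
  by auto

lemma mat_vec_cong: "Y 0 = Z 0 \<Longrightarrow> Y 1 = Z 1 \<Longrightarrow> Y 2 = Z 2 \<Longrightarrow> mat_vec M Y = mat_vec M Z"
  by (rule ext) (simp add: mat_vec_def)

lemma conic_cong: "Y 0 = Z 0 \<Longrightarrow> Y 1 = Z 1 \<Longrightarrow> Y 2 = Z 2 \<Longrightarrow> conic Y = conic Z"
  by (simp add: conic_def)

lemma cross3_cong: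
  "u 0 = u' 0 \<Longrightarrow> u 1 = u' 1 \<Longrightarrow> u 2 = u' 2 \<Longrightarrow> v 0 = v' 0 \<Longrightarrow> v 1 = v' 1 \<Longrightarrow> v 2 = v' 2
    \<Longrightarrow> cross3 u v = cross3 u' v'"
  by (rule ext) (simp add: cross3_def)

lemma cross3_commute: "cross3 u v i = - cross3 v u i"
  by (simp add: cross3_def)

lemma cross3_uminus_right: "cross3 u (\<lambda>i. - w i) i = - cross3 u w i"
  by (simp add: cross3_def algebra_simps)

lemma mat_vec_uminus: "mat_vec M (\<lambda>i. - W i) j = - mat_vec M W j"
  by (simp add: mat_vec_def algebra_simps)

lemma mat_vec_linear_combination:
  "mat_vec M (\<lambda>j. k * a j + c * b j) = (\<lambda>j. k * mat_vec M a j + c * mat_vec M b j)"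
  by (rule ext) (simp add: mat_vec_def algebra_simps)

lemma cross3_linear_combination:
  assumes "i < 3"
  shows "cross3 (\<lambda>j. k * a j + c * b j) (\<lambda>j. k * a' j + c * b' j) i =
    k^2 * cross3 a a' i + c * (k * (cross3 a b' i + cross3 b a' i) + c * cross3 b b' i)"
  using less_three_cases[OF assms]
  by (elim disjE) (simp_all add: cross3_def algebra_simps power2_eq_square)

lemma mat_vec_cross3_symmetric:
  assumes "symmetric3 A" "i < 3"
  shows "mat_vec A (cross3 (mat_vec A Y) v) i = cross3 Y (adj_mat_vec A v) i"
proof -
  have "A 1 0 = A 0 1" "A 2 0 = A 0 2" "A 2 1 = A 1 2"
    using assms(1) by (auto simp: symmetric3_def)
  with less_three_cases[OF assms(2)] show ?thesis
    by (elim disjE) (simp_all add: mat_vec_def cross3_def adj_mat_vec_def algebra_simps)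
qed

lemma cross3_cross3_common: "i < 3 \<Longrightarrow> cross3 (cross3 Y u) (cross3 Y v) i = det3 Y u v * Y i"
  by (drule less_three_cases) (elim disjE; simp add: cross3_def det3_def algebra_simps)

lemma quad_map_quad_map:
  assumes "symmetric3 A" "symmetric3 B" "i < 3"
  shows "quad_map A B (quad_map A B Y) i =
    - det3 Y (adj_mat_vec A (mat_vec B Y)) (adj_mat_vec B (mat_vec A Y)) * Y i"
proof -
  define a where "a = adj_mat_vec A (mat_vec B Y)"
  define b where "b = adj_mat_vec B (mat_vec A Y)"
  have A_image: "mat_vec A (quad_map A B Y) j = cross3 Y a j" if "j < 3" for j
    using mat_vec_cross3_symmetric[OF assms(1) that] by (simp add: quad_map_def a_def)
  have B_image: "mat_vec B (quad_map A B Y) j = - cross3 Y b j" if "j < 3" for j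
  proof -
    have "quad_map A B Y = (\<lambda>j. - cross3 (mat_vec B Y) (mat_vec A Y) j)"
      unfolding quad_map_def by (rule ext) (rule cross3_commute)
    then show ?thesis
      using mat_vec_cross3_symmetric[OF assms(2) that] by (simp add: mat_vec_uminus b_def)
  qed
  have "quad_map A B (quad_map A B Y) = cross3 (cross3 Y a) (\<lambda>j. - cross3 Y b j)"
    unfolding quad_map_def[of A B "quad_map A B Y"]
    by (rule cross3_cong) (simp_all add: A_image B_image)
  then show ?thesis
    using cross3_cross3_common[OF assms(3)] by (simp add: cross3_uminus_right a_def b_def)
qed

lemma quad_map_linear_combination:
  assumes "i < 3"
  shows "quad_map A B (\<lambda>j. k * a j + c * b j) i = k^2 * quad_map A B a i
    + c * (k * (cross3 (mat_vec A a) (mat_vec B b) i + cross3 (mat_vec A b) (mat_vec B a) i)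
           + c * quad_map A B b i)"
  unfolding quad_map_def mat_vec_linear_combination by (rule cross3_linear_combination[OF assms])

lemma conic_veronese: "conic (veronese s t) = 0"
  by (simp add: conic_def veronese_def power2_eq_square)

lemma conic_add_multiple_dvd:
  assumes "conic X = 0"
  shows "c dvd conic (\<lambda>i. u * X i + c * H i)"
proof -
  have "conic (\<lambda>i. u * X i + c * H i) =
      u^2 * conic X + c * (2 * u * X 1 * H 1 - u * X 0 * H 2 - u * X 2 * H 0 + c * conic H)"
    by (simp add: conic_def algebra_simps power2_eq_square)
  then show ?thesis using assms by simp
qed

text \<open>The scalar multiplying \<open>f i\<close> is minus the polar form of the conic at \<open>f\<close> and \<open>veronese pm qm\<close>.\<close>

lemma veronese_recurrence:
  assumes "i < 3"
  shows "veronese (qm * f 0 - pm * f 1) (qm * f 1 - pm * f 2) i =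
    (qm^2 * f 0 - 2 * pm * qm * f 1 + pm^2 * f 2) * f i + conic f * veronese pm qm i"
  using less_three_cases[OF assms]
  by (elim disjE) (simp_all add: veronese_def conic_def algebra_simps power2_eq_square)

lemma conic_quad_map_dvd:
  fixes A B :: "nat \<Rightarrow> nat \<Rightarrow> 'a::comm_ring_1" and p q :: 'a
  assumes "symmetric3 A" "symmetric3 B"
  defines "f \<equiv> quad_map A B (veronese p q)"
  shows "conic f dvd conic (quad_map A B
           (veronese (qm * f 0 - pm * f 1) (qm * f 1 - pm * f 2)))"
proof -
  define k where "k = qm^2 * f 0 - 2 * pm * qm * f 1 + pm^2 * f 2"
  define E where "E = veronese pm qm"
  define \<phi> where "\<phi> = - det3 (veronese p q) (adj_mat_vec A (mat_vec B (veronese p q)))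
                                           (adj_mat_vec B (mat_vec A (veronese p q)))"
  define H where "H = (\<lambda>i. k * (cross3 (mat_vec A f) (mat_vec B E) i
                              + cross3 (mat_vec A E) (mat_vec B f) i) + conic f * quad_map A B E i)"
  have next_point: "quad_map A B (veronese (qm * f 0 - pm * f 1) (qm * f 1 - pm * f 2))
      = quad_map A B (\<lambda>i. k * f i + conic f * E i)"
    unfolding quad_map_def
    by (intro arg_cong2[where f = cross3] mat_vec_cong)
       (simp_all add: veronese_recurrence[of 0, simplified] veronese_recurrence[of 1, simplified]
          veronese_recurrence[of 2, simplified] k_def E_def)
  have "quad_map A B (\<lambda>i. k * f i + conic f * E i) i = (k^2 * \<phi>) * veronese p q i + conic f * H i"
    if "i < 3" for i
  proof -
    have "quad_map A B (\<lambda>i. k * f i + conic f * E i) i = k^2 * quad_map A B f i + conic f * H i"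
      unfolding H_def by (rule quad_map_linear_combination[OF that])
    also have "quad_map A B f i = \<phi> * veronese p q i"
      unfolding f_def \<phi>_def by (rule quad_map_quad_map[OF assms(1,2) that])
    finally show ?thesis by (simp add: mult.assoc)
  qed
  then have "conic (quad_map A B (\<lambda>i. k * f i + conic f * E i))
      = conic (\<lambda>i. (k^2 * \<phi>) * veronese p q i + conic f * H i)"
    by (intro conic_cong) simp_all
  then show ?thesis
    unfolding next_point by (simp only: conic_add_multiple_dvd[OF conic_veronese])
qed

lemma symmetric3_Amat: "symmetric3 Amat"
  and symmetric3_Bmat: "symmetric3 Bmat"
  by (simp_all add: symmetric3_def)

lemma sum_lessThan_3: "(\<Sum>j<(3::nat). g j) = g 0 + g 1 + (g 2 :: 'a::comm_monoid_add)"
  by (simp add: numeral_3_eq_3 numeral_2_eq_2 lessThan_Suc add_ac)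

lemma Vvec_eq_veronese: "Vvec s t = veronese s t"
  by (rule ext) (simp add: Vvec_def veronese_def)

lemma AV_eq_mat_vec: "AV s t = mat_vec Amat (veronese s t)"
  and BV_eq_mat_vec: "BV s t = mat_vec Bmat (veronese s t)"
  by (rule ext; simp add: AV_def BV_def sum_lessThan_3 mat_vec_def Vvec_eq_veronese)+

lemma F_eq_quad_map:
  "F1 s t = quad_map Amat Bmat (veronese s t) 0"
  "F2 s t = quad_map Amat Bmat (veronese s t) 1"
  "F3 s t = quad_map Amat Bmat (veronese s t) 2"
  by (simp_all add: F1_def F2_def F3_def quad_map_def cross3_def AV_eq_mat_vec BV_eq_mat_vec)

lemma Qf_eq_conic: "Qf s t = conic (quad_map Amat Bmat (veronese s t))"
  by (simp add: Qf_def conic_def F_eq_quad_map)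

theorem theorem7:
  fixes n :: nat
  assumes "n \<ge> 1"
  shows "Qn n dvd Qn (Suc n)"
proof -
  obtain m where n: "n = Suc m" using assms by (cases n) auto
  obtain pm qm where prev: "pq m = (pm, qm)" by (cases "pq m")
  obtain p q where cur: "pq (Suc m) = (p, q)" by (cases "pq (Suc m)")
  have "Qn (Suc m) = conic (quad_map Amat Bmat (veronese p q))"
    by (simp add: Qn_def cur Qf_eq_conic)
  moreover have "Qn (Suc (Suc m)) = Qf (qm * F1 p q - pm * F2 p q) (qm * F2 p q - pm * F3 p q)"
    by (simp add: Qn_def prev cur)
  ultimately show ?thesis
    using conic_quad_map_dvd[OF symmetric3_Amat symmetric3_Bmat]
    by (simp only: n Qf_eq_conic F_eq_quad_map)
qed

end
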